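(* Let $\mathbb{H}$ be a real Hilbert space (of dimension at least $2$) and $\mathbb{Y}$ a two-dimensional smooth and strictly convex real Banach space. Let $T\in\mathbb{L}(\mathbb{H},\mathbb{Y})$ be of rank one with $\|T\|=1$. Then $M_T=\{\pm x\}$ for some $x\in S_{\mathbb{H}}$. Moreover, $T$ is an extreme contraction if and only if $(x,Tx)$ is not a CPP.
   Context: $M_T=\{x\in S_{\mathbb{H}}:\|Tx\|=\|T\|\}$. A norm one $T$ is an extreme contraction if it is an extreme point of the closed unit ball of $\mathbb{L}(\mathbb{H},\mathbb{Y})$. $B(x,r)=\{u:\|u-x\|<r\}$. $x\perp_B y$ means $\|x+\lambda y\|\ge\|x\|$ for all real $\lambda$; $x^\perp=\{y:x\perp_By\}$. For $x\in S_{\mathbb{H}}$, $y\in S_{\mathbb{Y}}$, $(x,y)$ is a CPP if there exist $r>0,\mu>0$ such that for all $z\in x^\perp\cap S_{\mathbb{H}}$, all $w\in y^\perp\cap S_{\mathbb{Y}}$ and all $a,b\in\mathbb{R}$, $ax+bz\in B(x,r)\cap S_{\mathbb{H}}$ implies $\|ay+b\mu w\|\le1$. *)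

theory Defs
  imports "HOL-Analysis.Analysis"
begin

definition bj_orth :: "'a::real_normed_vector \<Rightarrow> 'a \<Rightarrow> bool" where
  "bj_orth x y \<longleftrightarrow> (\<forall>l::real. norm (x + l *\<^sub>R y) \<ge> norm x)"

definition smooth_space :: "'a::real_normed_vector itself \<Rightarrow> bool" where
  "smooth_space _ \<longleftrightarrow>
     (\<forall>y::'a. norm y = 1 \<longrightarrow> (\<exists>!f::'a \<Rightarrow>\<^sub>L real. norm f = 1 \<and> blinfun_apply f y = 1))"

definition strictly_convex_space :: "'a::real_normed_vector itself \<Rightarrow> bool" where
  "strictly_convex_space _ \<longleftrightarrow>
     (\<forall>x y::'a. norm x = 1 \<and> norm y = 1 \<and> x \<noteq> y \<longrightarrow> norm ((1/2) *\<^sub>R (x + y)) < 1)"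

definition norm_attain :: "('a::real_normed_vector \<Rightarrow>\<^sub>L 'b::real_normed_vector) \<Rightarrow> 'a set" where
  "norm_attain T = {x. norm x = 1 \<and> norm (blinfun_apply T x) = norm T}"

definition extreme_contraction :: "('a::real_normed_vector \<Rightarrow>\<^sub>L 'b::real_normed_vector) \<Rightarrow> bool" where
  "extreme_contraction T \<longleftrightarrow> norm T = 1 \<and> T extreme_point_of (cball 0 1)"

definition CPP :: "'a::real_normed_vector \<Rightarrow> 'b::real_normed_vector \<Rightarrow> bool" where
  "CPP x y \<longleftrightarrow> norm x = 1 \<and> norm y = 1 \<and>
     (\<exists>r>0. \<exists>\<mu>>0. \<forall>z w. \<forall>a b::real.
        bj_orth x z \<and> norm z = 1 \<and> bj_orth y w \<and> norm w = 1 \<and>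
        a *\<^sub>R x + b *\<^sub>R z \<in> ball x r \<and> norm (a *\<^sub>R x + b *\<^sub>R z) = 1
        \<longrightarrow> norm (a *\<^sub>R y + (b * \<mu>) *\<^sub>R w) \<le> 1)"

end

theory Submission
  imports Defs
begin

(*
  By the Riesz representation theorem a rank-one operator T of norm one has the form
  T h = <h, x> y with unit vectors x and y, so M_T = {x, -x}.  Both extremality of T and
  the CPP of (x, y) turn out to be equivalent to the existence of a nonzero w with
  norm (a y + b w) <= sqrt (a^2 + b^2) for all real a, b.  If T + S and T - S are
  contractions with S nonzero, strict convexity forces S x = 0, and w = S z for a suitable
  unit z orthogonal to x works; conversely such a w gives the perturbation
  S h = <h, z> w.  On the CPP side, in a two-dimensional space the Birkhoff-James
  orthogonal directions of y are multiples of such a w, and the CPP inequality,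
  after shrinking mu, extends from a neighbourhood of x to the whole unit circle.
*)

section \<open>Inner product spaces\<close>

lemma norm_add_power2_inner:
  fixes a b :: "'a::real_inner"
  shows "(norm (a + b))\<^sup>2 = (norm a)\<^sup>2 + 2 * inner a b + (norm b)\<^sup>2"
  by (simp add: power2_norm_eq_inner inner_add_left inner_add_right inner_commute)

lemma bj_orth_iff_inner_eq_0:
  fixes x z :: "'a::real_inner"
  shows "bj_orth x z \<longleftrightarrow> inner x z = 0"
proof
  assume bj: "bj_orth x z"
  show "inner x z = 0"
  proof (rule ccontr)
    assume k: "inner x z \<noteq> 0"
    then have q: "(norm z)\<^sup>2 > 0" by auto
    define l where "l = - inner x z / (norm z)\<^sup>2"
    have "(norm (x + l *\<^sub>R z))\<^sup>2 = (norm x)\<^sup>2 + 2 * l * inner x z + l\<^sup>2 * (norm z)\<^sup>2"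
      by (simp add: norm_add_power2_inner power_mult_distrib)
    also have "\<dots> = (norm x)\<^sup>2 - (inner x z)\<^sup>2 / (norm z)\<^sup>2"
      using q by (simp add: l_def field_simps power2_eq_square)
    also have "\<dots> < (norm x)\<^sup>2" using k q by simp
    finally have "norm (x + l *\<^sub>R z) < norm x" by (simp add: power_less_imp_less_base)
    with bj show False unfolding bj_orth_def by (meson not_le)
  qed
next
  assume "inner x z = 0"
  then have "(norm x)\<^sup>2 \<le> (norm (x + l *\<^sub>R z))\<^sup>2" for l
    by (simp add: norm_add_power2_inner)
  then show "bj_orth x z" unfolding bj_orth_def by (meson norm_ge_zero power2_le_imp_le)
qed

lemma norm_orthonormal_combination:
  fixes x z :: "'a::real_inner"
  assumes "norm x = 1" "norm z = 1" "inner x z = 0"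
  shows "norm (a *\<^sub>R x + b *\<^sub>R z) = sqrt (a\<^sup>2 + b\<^sup>2)"
  using norm_add_power2_inner[of "a *\<^sub>R x" "b *\<^sub>R z"] assms
  by (simp add: power_mult_distrib real_sqrt_unique)

lemma bessel_inequality_pair:
  fixes x z :: "'a::real_inner"
  assumes "norm x = 1" "norm z = 1" "inner x z = 0"
  shows "sqrt ((inner h x)\<^sup>2 + (inner h z)\<^sup>2) \<le> norm h"
proof -
  define q where "q = inner h x *\<^sub>R x + inner h z *\<^sub>R z"
  have nq: "norm q = sqrt ((inner h x)\<^sup>2 + (inner h z)\<^sup>2)"
    unfolding q_def using assms by (rule norm_orthonormal_combination)
  have "(norm q)\<^sup>2 = inner h q"
    using nq by (simp add: q_def inner_add_right power2_eq_square)
  also have "\<dots> \<le> norm h * norm q" by (rule order_trans[OF abs_ge_self Cauchy_Schwarz_ineq2])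
  finally have le: "norm q * norm q \<le> norm h * norm q" by (simp add: power2_eq_square)
  have "norm q \<le> norm h"
  proof (cases "norm q = 0")
    case False
    with le show ?thesis by (simp add: mult_le_cancel_right)
  qed simp
  with nq show ?thesis by simp
qed

lemma exists_unit_orthogonal:
  fixes x u v :: "'a::real_inner"
  assumes u: "norm u = 1" and v: "norm v = 1" and uv: "inner u v = 0"
  shows "\<exists>z. norm z = 1 \<and> inner x z = 0"
proof (cases "inner x u = 0")
  case True
  then show ?thesis using u by blast
next
  case False
  define z where "z = inner x v *\<^sub>R u + (- inner x u) *\<^sub>R v"
  have "norm z = sqrt ((inner x v)\<^sup>2 + (inner x u)\<^sup>2)"
    using norm_orthonormal_combination[OF u v uv, of "inner x v" "- inner x u"] by (simp add: z_def)
  then have "z \<noteq> 0" using False by auto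
  moreover have "inner x z = 0" by (simp add: z_def inner_diff_right inner_commute)
  ultimately show ?thesis
    by (intro exI[of _ "(1 / norm z) *\<^sub>R z"]) simp
qed

lemma abs_inner_unit_eq_1D:
  fixes h u :: "'a::real_inner"
  assumes "norm h = 1" "norm u = 1" "\<bar>inner h u\<bar> = 1"
  shows "h = u \<or> h = -u"
  using assms norm_cauchy_schwarz_abs_eq[of h u] by auto

lemma bj_orth_kernel_of_supporting_functional:
  fixes f :: "'a::real_normed_vector \<Rightarrow>\<^sub>L real"
  assumes "norm f \<le> 1" "norm y = 1" "f y = 1" "f w = 0"
  shows "bj_orth y w"
  unfolding bj_orth_def
proof
  fix l :: real
  have "1 = f (y + l *\<^sub>R w)"
    using assms by (simp add: blinfun.add_right blinfun.scaleR_right)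
  also have "\<dots> \<le> norm f * norm (y + l *\<^sub>R w)"
    using norm_blinfun[of f "y + l *\<^sub>R w"] by simp
  also have "\<dots> \<le> norm (y + l *\<^sub>R w)"
    using assms(1) by (simp add: mult_left_le_one_le)
  finally show "norm y \<le> norm (y + l *\<^sub>R w)" using assms(2) by simp
qed

lemma blinfun_almost_attains_norm:
  fixes f :: "'a::real_normed_vector \<Rightarrow>\<^sub>L real"
  assumes "\<epsilon> > 0"
  shows "\<exists>h. norm h \<le> 1 \<and> f h > norm f - \<epsilon>"
proof (rule ccontr)
  assume none: "\<not> ?thesis"
  have le: "f h \<le> norm f - \<epsilon>" if "norm h \<le> 1" for h
    using none that not_le by blast
  have nonneg: "0 \<le> norm f - \<epsilon>" using le[of 0] by simp
  have "norm (f h) \<le> (norm f - \<epsilon>) * norm h" for h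
  proof (cases "h = 0")
    case False
    let ?e = "(1 / norm h) *\<^sub>R h"
    have "f h / norm h \<le> norm f - \<epsilon>" "- (norm f - \<epsilon>) \<le> f h / norm h"
      using le[of ?e] le[of "- ?e"] False
      by (simp_all add: blinfun.scaleR_right blinfun.minus_right)
    then have "f h \<le> (norm f - \<epsilon>) * norm h" "- (norm f - \<epsilon>) * norm h \<le> f h"
      using False by (simp_all add: pos_divide_le_eq pos_le_divide_eq)
    then show ?thesis by (auto simp: abs_le_iff algebra_simps)
  qed simp
  then have "norm f \<le> norm f - \<epsilon>" by (rule norm_blinfun_bound[OF nonneg])
  with assms show False by simp
qed

text \<open>A maximising sequence in the unit ball is Cauchy by the parallelogram law; its limit
  attains the norm.\<close>
lemma norm_one_functional_attains_norm:
  fixes c :: "'a::{real_inner, complete_space} \<Rightarrow>\<^sub>L real"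
  assumes nc: "norm c = 1"
  shows "\<exists>u. norm u = 1 \<and> c u = 1"
proof -
  define e :: "nat \<Rightarrow> real" where "e n = inverse (real (Suc n))" for n
  have e: "0 < e n" "e n \<le> 1" for n by (simp_all add: e_def inverse_le_1_iff)
  obtain hs where hs1: "\<And>n. norm (hs n) \<le> 1" and hs2: "\<And>n. c (hs n) > 1 - e n"
    using blinfun_almost_attains_norm[OF e(1), of c] nc by metis
  have gap: "(norm (hs m - hs n))\<^sup>2 \<le> 4 * (e m + e n)" for m n
  proof -
    have "2 - (e m + e n) < c (hs m) + c (hs n)" using hs2[of m] hs2[of n] by simp
    also have "\<dots> = c (hs m + hs n)" by (simp add: blinfun.add_right)
    also have "\<dots> \<le> norm (hs m + hs n)"
      using norm_blinfun[of c "hs m + hs n"] nc by simp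
    finally have "(2 - (e m + e n))\<^sup>2 \<le> (norm (hs m + hs n))\<^sup>2"
      using e[of m] e[of n] by (intro power_mono) auto
    moreover have "(norm (hs m - hs n))\<^sup>2 + (norm (hs m + hs n))\<^sup>2
        = 2 * (norm (hs m))\<^sup>2 + 2 * (norm (hs n))\<^sup>2"
      using norm_add_power2_inner[of "hs m" "hs n"] norm_add_power2_inner[of "hs m" "- hs n"]
      by simp
    moreover have "(norm (hs m))\<^sup>2 \<le> 1" "(norm (hs n))\<^sup>2 \<le> 1"
      using hs1 by (simp_all add: power_le_one)
    moreover have "(2 - (e m + e n))\<^sup>2 = 4 - 4 * (e m + e n) + (e m + e n)\<^sup>2"
      by (simp add: power2_eq_square algebra_simps)
    ultimately show ?thesis
      using zero_le_power2[of "e m + e n"] by linarith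
  qed
  have "Cauchy hs"
  proof (rule CauchyI)
    fix \<delta> :: real assume "\<delta> > 0"
    then have "\<forall>\<^sub>F n in sequentially. e n < \<delta>\<^sup>2 / 8"
      unfolding e_def by (intro order_tendstoD(2)[OF LIMSEQ_inverse_real_of_nat]) simp
    then obtain M where M: "\<And>n. n \<ge> M \<Longrightarrow> e n < \<delta>\<^sup>2 / 8"
      by (auto simp: eventually_sequentially)
    have "norm (hs m - hs n) < \<delta>" if "m \<ge> M" "n \<ge> M" for m n
    proof -
      have "(norm (hs m - hs n))\<^sup>2 < \<delta>\<^sup>2"
        using gap[of m n] M[OF that(1)] M[OF that(2)] by simp
      with \<open>\<delta> > 0\<close> show ?thesis by (simp add: power_less_imp_less_base)
    qed
    then show "\<exists>M. \<forall>m\<ge>M. \<forall>n\<ge>M. norm (hs m - hs n) < \<delta>" by blast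
  qed
  then obtain u where u: "hs \<longlonglongrightarrow> u" by (auto simp: Cauchy_convergent_iff convergent_def)
  have "norm u \<le> 1"
    using hs1 by (intro LIMSEQ_le_const2[OF tendsto_norm[OF u]]) auto
  moreover have "1 \<le> c u"
  proof (rule LIMSEQ_le[of "\<lambda>n. 1 - e n" 1 "\<lambda>n. c (hs n)"])
    show "(\<lambda>n. 1 - e n) \<longlonglongrightarrow> 1"
      unfolding e_def using tendsto_diff[OF tendsto_const LIMSEQ_inverse_real_of_nat, of 1] by simp
    show "(\<lambda>n. c (hs n)) \<longlonglongrightarrow> c u" using u by (intro tendsto_intros)
  qed (use hs2 less_imp_le in blast)
  moreover have "c u \<le> norm u" using norm_blinfun[of c u] nc by simp
  ultimately show ?thesis by (intro exI[of _ u]) auto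
qed

lemma riesz_representation_norm_one:
  fixes c :: "'a::{real_inner, complete_space} \<Rightarrow>\<^sub>L real"
  assumes nc: "norm c = 1"
  shows "\<exists>u. norm u = 1 \<and> (\<forall>h. c h = inner h u)"
proof -
  obtain u where u: "norm u = 1" "c u = 1"
    using norm_one_functional_attains_norm[OF nc] by blast
  have "c h = inner h u" for h
  proof -
    have "c (h - c h *\<^sub>R u) = 0" using u by (simp add: blinfun.diff_right blinfun.scaleR_right)
    then have "bj_orth u (h - c h *\<^sub>R u)"
      using nc u by (intro bj_orth_kernel_of_supporting_functional) auto
    then have "inner u (h - c h *\<^sub>R u) = 0" by (simp add: bj_orth_iff_inner_eq_0)
    then show ?thesis using u by (simp add: inner_diff_right inner_commute power2_norm_eq_inner[symmetric])
  qed
  with u show ?thesis by blast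
qed

section \<open>Rank-one operators of norm one\<close>

lemma rank_one_blinfun_factor:
  fixes T :: "'a::real_normed_vector \<Rightarrow>\<^sub>L 'b::real_normed_vector"
  assumes smooth: "smooth_space TYPE('b)" and rank1: "dim (range (blinfun_apply T)) = 1"
  obtains c :: "'a \<Rightarrow>\<^sub>L real" and y where "norm y = 1" "norm c = norm T" "\<And>h. T h = c h *\<^sub>R y"
proof -
  obtain B where B: "independent B" "range (blinfun_apply T) \<subseteq> span B" "card B = 1"
    using basis_exists[of "range (blinfun_apply T)"] rank1 by metis
  then obtain y1 where y1: "B = {y1}" by (meson card_1_singletonE)
  define y where "y = (1 / norm y1) *\<^sub>R y1"
  have y: "norm y = 1" using B(1) y1 by (simp add: y_def)
  have Ty: "\<exists>k. T h = k *\<^sub>R y" for h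
  proof -
    obtain k where "T h = k *\<^sub>R y1" using B(2) y1 by (auto simp: span_singleton)
    then have "T h = (k * norm y1) *\<^sub>R y" using B(1) y1 by (simp add: y_def)
    then show ?thesis ..
  qed
  obtain f :: "'b \<Rightarrow>\<^sub>L real" where f: "norm f = 1" "f y = 1"
    using smooth y unfolding smooth_space_def by blast
  define c where "c = f o\<^sub>L T"
  have Tc: "T h = c h *\<^sub>R y" for h
    using Ty[of h] f by (auto simp: c_def blinfun.scaleR_right)
  have nTc: "norm (T h) = norm (c h)" for h using y by (simp add: Tc)
  have "norm T \<le> norm c"
    by (rule norm_blinfun_bound) (simp_all only: nTc norm_blinfun norm_ge_zero)
  moreover have "norm c \<le> norm T"
    by (rule norm_blinfun_bound) (simp_all only: nTc[symmetric] norm_blinfun norm_ge_zero)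
  ultimately have "norm c = norm T" by simp
  with y Tc show ?thesis using that by auto
qed

lemma rank_one_norm_one_eq_inner:
  fixes T :: "'h::{real_inner, complete_space} \<Rightarrow>\<^sub>L 'y::real_normed_vector"
  assumes "smooth_space TYPE('y)" "dim (range (blinfun_apply T)) = 1" "norm T = 1"
  obtains x y where "norm x = 1" "norm y = 1" "\<And>h. T h = inner h x *\<^sub>R y"
proof -
  obtain c :: "'h \<Rightarrow>\<^sub>L real" and y
    where y: "norm y = 1" and c: "norm c = norm T" and Tc: "\<And>h. T h = c h *\<^sub>R y"
    using rank_one_blinfun_factor assms(1,2) by blast
  obtain x where "norm x = 1" "\<And>h. c h = inner h x"
    using riesz_representation_norm_one c assms(3) by metis
  with y Tc that show ?thesis by simp
qed

lemma norm_inner_tensor: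
  fixes T :: "'h::real_inner \<Rightarrow>\<^sub>L 'y::real_normed_vector"
  assumes x: "norm x = 1" and y: "norm y = 1" and T: "\<And>h. T h = inner h x *\<^sub>R y"
  shows "norm T = 1"
proof (rule norm_blinfun_eqI)
  show "1 \<le> norm (T x) / norm x" using x y by (simp add: T power2_norm_eq_inner[symmetric])
  show "norm (T h) \<le> 1 * norm h" for h
    using Cauchy_Schwarz_ineq2[of h x] x y by (simp add: T)
qed simp

lemma norm_attain_inner_tensor:
  fixes T :: "'h::real_inner \<Rightarrow>\<^sub>L 'y::real_normed_vector"
  assumes x: "norm x = 1" and y: "norm y = 1" and T: "\<And>h. T h = inner h x *\<^sub>R y"
  shows "norm_attain T = {x, -x}"
proof -
  have "norm_attain T = {h. norm h = 1 \<and> \<bar>inner h x\<bar> = 1}"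
    using norm_inner_tensor[OF assms] y by (simp add: norm_attain_def T)
  also have "\<dots> = {x, -x}"
    using abs_inner_unit_eq_1D[OF _ x] x by (auto simp: power2_norm_eq_inner[symmetric])
  finally show ?thesis .
qed

section \<open>Pairs dominated by the Euclidean norm\<close>

definition ell2_contractive :: "'a::real_normed_vector \<Rightarrow> 'a \<Rightarrow> bool" where
  "ell2_contractive y w \<longleftrightarrow> (\<forall>a b. norm (a *\<^sub>R y + b *\<^sub>R w) \<le> sqrt (a\<^sup>2 + b\<^sup>2))"

lemma ell2_contractive_uminus:
  "ell2_contractive y w \<Longrightarrow> ell2_contractive y (- w)"
  unfolding ell2_contractive_def by (metis power2_minus scaleR_minus_left scaleR_minus_right)

lemma ell2_contractive_if_unit_circle:
  assumes "\<And>a b. a\<^sup>2 + b\<^sup>2 = 1 \<Longrightarrow> norm (a *\<^sub>R y + b *\<^sub>R w) \<le> 1"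
  shows "ell2_contractive y w"
  unfolding ell2_contractive_def
proof (intro allI)
  fix a b :: real
  define \<rho> where "\<rho> = sqrt (a\<^sup>2 + b\<^sup>2)"
  show "norm (a *\<^sub>R y + b *\<^sub>R w) \<le> \<rho>"
  proof (cases "\<rho> = 0")
    case True
    then show ?thesis by (simp add: \<rho>_def)
  next
    case False
    then have \<rho>: "\<rho> > 0" by (simp add: \<rho>_def order_less_le)
    have "(a / \<rho>)\<^sup>2 + (b / \<rho>)\<^sup>2 = 1"
      using False by (simp add: \<rho>_def power_divide add_divide_distrib[symmetric])
    then have "norm ((a / \<rho>) *\<^sub>R y + (b / \<rho>) *\<^sub>R w) \<le> 1" by (rule assms)
    moreover have "(a / \<rho>) *\<^sub>R y + (b / \<rho>) *\<^sub>R w = (1 / \<rho>) *\<^sub>R (a *\<^sub>R y + b *\<^sub>R w)"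
      by (simp add: scaleR_add_right)
    ultimately show ?thesis using \<rho> by (simp add: divide_le_eq)
  qed
qed

lemma ell2_contractive_scaleR_self:
  assumes "norm y = 1" "ell2_contractive y (c *\<^sub>R y)"
  shows "c = 0"
proof -
  have "1 *\<^sub>R y + c *\<^sub>R (c *\<^sub>R y) = (1 + c\<^sup>2) *\<^sub>R y"
    by (simp add: power2_eq_square algebra_simps)
  then have "norm (1 *\<^sub>R y + c *\<^sub>R (c *\<^sub>R y)) = 1 + c\<^sup>2"
    using assms(1) by (simp add: add_nonneg_nonneg)
  then have "1 + c\<^sup>2 \<le> sqrt (1 + c\<^sup>2)"
    using assms(2) unfolding ell2_contractive_def by (metis power_one)
  then have "(1 + c\<^sup>2)\<^sup>2 \<le> (sqrt (1 + c\<^sup>2))\<^sup>2"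
    by (rule power_mono) (simp add: add_nonneg_nonneg)
  also have "\<dots> = 1 + c\<^sup>2" by (simp add: add_nonneg_nonneg)
  finally have "(1 + c\<^sup>2)\<^sup>2 \<le> 1 + c\<^sup>2" .
  then have "c\<^sup>2 * (1 + c\<^sup>2) \<le> 0" by (simp add: power2_eq_square algebra_simps)
  moreover have "0 < 1 + c\<^sup>2" by (simp add: add_pos_nonneg)
  ultimately show ?thesis by (simp add: mult_le_0_iff)
qed

lemma ell2_contractive_bj_orth_coeff:
  assumes y: "norm y = 1" and contr: "ell2_contractive y v"
    and bj: "bj_orth y (\<alpha> *\<^sub>R y + \<gamma> *\<^sub>R v)"
  shows "\<alpha> = 0"
proof (rule ccontr)
  assume a: "\<alpha> \<noteq> 0"
  define D where "D = \<alpha>\<^sup>2 + \<gamma>\<^sup>2"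
  have D: "D > 0" using a by (simp add: D_def add_pos_nonneg)
  define l where "l = - \<alpha> / D"
  have "1 \<le> norm (y + l *\<^sub>R (\<alpha> *\<^sub>R y + \<gamma> *\<^sub>R v))" using bj y by (simp add: bj_orth_def)
  also have "y + l *\<^sub>R (\<alpha> *\<^sub>R y + \<gamma> *\<^sub>R v) = (1 + l * \<alpha>) *\<^sub>R y + (l * \<gamma>) *\<^sub>R v"
    by (simp add: algebra_simps)
  also have "norm \<dots> \<le> sqrt ((1 + l * \<alpha>)\<^sup>2 + (l * \<gamma>)\<^sup>2)"
    using contr by (simp add: ell2_contractive_def)
  finally have "1 \<le> (1 + l * \<alpha>)\<^sup>2 + (l * \<gamma>)\<^sup>2" by (simp add: real_le_rsqrt)
  also have "(1 + l * \<alpha>)\<^sup>2 + (l * \<gamma>)\<^sup>2 = 1 + 2 * l * \<alpha> + l\<^sup>2 * D"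
    by (simp add: D_def power2_eq_square algebra_simps)
  also have "\<dots> = 1 - \<alpha>\<^sup>2 / D"
    using D by (simp add: l_def field_simps power2_eq_square)
  finally show False using a D by (simp add: divide_le_0_iff)
qed

lemma strictly_convex_space_eq_0:
  fixes y v :: "'a::real_normed_vector"
  assumes strict: "strictly_convex_space TYPE('a)" and y: "norm y = 1"
    and "norm (y + v) \<le> 1" "norm (y - v) \<le> 1"
  shows "v = 0"
proof (rule ccontr)
  assume "v \<noteq> 0"
  have ne: "y + v \<noteq> y - v"
  proof
    assume "y + v = y - v"
    then have "2 *\<^sub>R v = 0" by (simp add: scaleR_2 algebra_simps)
    with \<open>v \<noteq> 0\<close> show False by simp
  qed
  have sum: "(y + v) + (y - v) = 2 *\<^sub>R y" by (simp add: scaleR_2)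
  have "2 = norm ((y + v) + (y - v))" using y by (simp only: sum) simp
  also have "\<dots> \<le> norm (y + v) + norm (y - v)" by (rule norm_triangle_ineq)
  finally have "norm (y + v) = 1" "norm (y - v) = 1" using assms(3,4) by linarith+
  with strict ne have "norm ((1/2) *\<^sub>R ((y + v) + (y - v))) < 1"
    unfolding strictly_convex_space_def by blast
  with y show False by (simp only: sum) simp
qed

lemma not_extreme_point_imp_symmetric_pair:
  assumes S: "convex S" and x: "x \<in> S" and ne: "\<not> x extreme_point_of S"
  obtains d where "d \<noteq> 0" "x + d \<in> S" "x - d \<in> S"
proof -
  obtain a b where ab: "a \<in> S" "b \<in> S" "x \<in> open_segment a b"
    using ne x unfolding extreme_point_of_def by blast
  then obtain t where t: "a \<noteq> b" "0 < t" "t < 1" "x = (1 - t) *\<^sub>R a + t *\<^sub>R b"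
    by (auto simp: in_segment)
  define s where "s = min t (1 - t)"
  have s: "0 < s" "s \<le> t" "s \<le> 1 - t" using t by (auto simp: s_def)
  have "x + s *\<^sub>R (b - a) = (1 - (t + s)) *\<^sub>R a + (t + s) *\<^sub>R b"
       "x - s *\<^sub>R (b - a) = (1 - (t - s)) *\<^sub>R a + (t - s) *\<^sub>R b"
    using t by (simp_all add: algebra_simps)
  moreover have "(1 - (t + s)) *\<^sub>R a + (t + s) *\<^sub>R b \<in> S"
                "(1 - (t - s)) *\<^sub>R a + (t - s) *\<^sub>R b \<in> S"
    using s t ab by (auto intro!: convexD[OF S])
  moreover have "s *\<^sub>R (b - a) \<noteq> 0" using s t by simp
  ultimately show ?thesis using that by metis
qed

lemma dim2_span_pair:
  fixes y v w :: "'a::real_vector"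
  assumes dim2: "dim (UNIV :: 'a set) = 2" and y: "y \<noteq> 0" and v: "v \<notin> span {y}"
  shows "w \<in> span {y, v}"
proof (rule ccontr)
  assume w: "w \<notin> span {y, v}"
  obtain B :: "'a set" where B: "independent B" "UNIV \<subseteq> span B" "card B = 2"
    using basis_exists[of "UNIV :: 'a set"] dim2 by metis
  have "finite B" using B(3) by (metis card.infinite zero_neq_numeral)
  have "v \<noteq> y" using v by (auto simp: span_base)
  with y v have "independent {v, y}" by (simp add: independent_insert)
  moreover have "w \<notin> span {v, y}" using w by (simp add: insert_commute)
  ultimately have "independent {w, v, y}"
    using y by (simp add: independent_insert span_base)
  then have "card {w, v, y} \<le> 2"
    using independent_span_bound[OF \<open>finite B\<close>] B by auto
  moreover have "w \<noteq> v" "w \<noteq> y" using w by (auto simp: span_base)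
  ultimately show False using \<open>v \<noteq> y\<close> by simp
qed

lemma dim2_linear_functional_kernel:
  fixes f :: "'a::real_vector \<Rightarrow> real"
  assumes dim2: "dim (UNIV :: 'a set) = 2" and f: "linear f"
  obtains w where "w \<noteq> 0" "f w = 0"
proof -
  obtain B :: "'a set" where B: "independent B" "card B = 2"
    using basis_exists[of "UNIV :: 'a set"] dim2 by metis
  then obtain e1 e2 where e: "B = {e1, e2}" "e1 \<noteq> e2" by (meson card_2_iff)
  have "independent (insert e2 {e1})" using B(1) e(1) by (simp add: insert_commute)
  with e(2) have e1: "e1 \<noteq> 0" and e2: "e2 \<notin> span {e1}"
    unfolding independent_insert by (auto split: if_splits)
  show ?thesis
  proof (cases "f e1 = 0")
    case True
    with e1 that show ?thesis by blast
  next
    case False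
    define w where "w = f e2 *\<^sub>R e1 - f e1 *\<^sub>R e2"
    have "f w = 0" using f by (simp add: w_def linear_diff linear_scale)
    moreover have "w \<noteq> 0"
    proof
      assume "w = 0"
      then have "f e1 *\<^sub>R e2 = f e2 *\<^sub>R e1" by (simp add: w_def)
      then have "(1 / f e1) *\<^sub>R (f e1 *\<^sub>R e2) = (1 / f e1) *\<^sub>R (f e2 *\<^sub>R e1)" by simp
      then have "e2 = (f e2 / f e1) *\<^sub>R e1" using False by simp
      with e2 show False by (metis span_base span_scale singletonI)
    qed
    ultimately show ?thesis using that by blast
  qed
qed

lemma exists_unit_bj_orth:
  fixes y :: "'a::real_normed_vector"
  assumes "dim (UNIV :: 'a set) = 2" "smooth_space TYPE('a)" "norm y = 1"
  obtains w where "norm w = 1" "bj_orth y w"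
proof -
  obtain f :: "'a \<Rightarrow>\<^sub>L real" where f: "norm f = 1" "f y = 1"
    using assms(2,3) unfolding smooth_space_def by blast
  have "linear (blinfun_apply f)"
    by (simp add: blinfun.bounded_linear_right bounded_linear.linear)
  then obtain w where w: "w \<noteq> 0" "f w = 0"
    using dim2_linear_functional_kernel[OF assms(1)] by blast
  have "bj_orth y ((1 / norm w) *\<^sub>R w)"
    using f w assms(3) by (intro bj_orth_kernel_of_supporting_functional)
      (simp_all add: blinfun.scaleR_right)
  then show ?thesis using w by (intro that) simp_all
qed

lemma bj_orth_dim2_ell2_contractive:
  fixes y :: "'a::real_normed_vector"
  assumes dim2: "dim (UNIV :: 'a set) = 2" and y: "norm y = 1"
    and v: "v \<noteq> 0" "ell2_contractive y v" and bj: "bj_orth y w"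
  obtains \<gamma> where "w = \<gamma> *\<^sub>R v"
proof -
  have "v \<notin> span {y}"
    using ell2_contractive_scaleR_self[OF y] v by (auto simp: span_singleton)
  then have "w \<in> span {y, v}" using y by (intro dim2_span_pair[OF dim2]) auto
  then obtain \<alpha> \<gamma> where w: "w = \<alpha> *\<^sub>R y + \<gamma> *\<^sub>R v"
    by (auto simp: span_breakdown_eq span_singleton algebra_simps)
  then have "\<alpha> = 0" using ell2_contractive_bj_orth_coeff[OF y v(2)] bj by blast
  with w have "w = \<gamma> *\<^sub>R v" by simp
  then show ?thesis by (rule that)
qed

lemma not_extreme_imp_ell2_contractive:
  fixes T :: "'h::real_inner \<Rightarrow>\<^sub>L 'y::real_normed_vector"
  assumes strict: "strictly_convex_space TYPE('y)"
    and x: "norm x = 1" and y: "norm y = 1" and T: "\<And>h. T h = inner h x *\<^sub>R y"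
    and ne: "\<not> T extreme_point_of cball 0 1"
  obtains v where "v \<noteq> 0" "ell2_contractive y v"
proof -
  have "T \<in> cball 0 1" using norm_inner_tensor[OF x y T] by simp
  then obtain S where S: "S \<noteq> 0" "norm (T + S) \<le> 1" "norm (T - S) \<le> 1"
    using not_extreme_point_imp_symmetric_pair[OF convex_cball _ ne] by auto
  have plus: "norm (T h + S h) \<le> norm h" for h
    using order_trans[OF norm_blinfun[of "T + S" h] mult_right_mono[OF S(2) norm_ge_zero]]
    by (simp add: plus_blinfun.rep_eq)
  have minus: "norm (T h - S h) \<le> norm h" for h
    using order_trans[OF norm_blinfun[of "T - S" h] mult_right_mono[OF S(3) norm_ge_zero]]
    by (simp add: minus_blinfun.rep_eq)
  have xx: "inner x x = 1" using x by (simp add: power2_norm_eq_inner[symmetric])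
  have Sx: "S x = 0"
    using strictly_convex_space_eq_0[OF strict y] plus[of x] minus[of x] x by (simp add: T xx)
  obtain h where "S h \<noteq> 0" using S(1) by (metis blinfun_eqI zero_blinfun.rep_eq)
  define p where "p = h - inner h x *\<^sub>R x"
  have Sp: "S p = S h" using Sx by (simp add: p_def blinfun.diff_right blinfun.scaleR_right)
  have "p \<noteq> 0" using Sp \<open>S h \<noteq> 0\<close> by auto
  define z where "z = (1 / norm p) *\<^sub>R p"
  have z: "norm z = 1" "inner x z = 0"
    using \<open>p \<noteq> 0\<close> by (simp_all add: z_def p_def inner_diff_right xx inner_commute)
  have "S z \<noteq> 0" using \<open>p \<noteq> 0\<close> Sp \<open>S h \<noteq> 0\<close> by (simp add: z_def blinfun.scaleR_right)
  moreover have "ell2_contractive y (S z)"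
    unfolding ell2_contractive_def
  proof (intro allI)
    fix a b :: real
    have "T (a *\<^sub>R x + b *\<^sub>R z) = a *\<^sub>R y" using z xx
      by (simp add: T inner_add_left inner_commute[of z x])
    moreover have "S (a *\<^sub>R x + b *\<^sub>R z) = b *\<^sub>R S z"
      using Sx by (simp add: blinfun.add_right blinfun.scaleR_right)
    ultimately show "norm (a *\<^sub>R y + b *\<^sub>R S z) \<le> sqrt (a\<^sup>2 + b\<^sup>2)"
      using plus[of "a *\<^sub>R x + b *\<^sub>R z"] norm_orthonormal_combination[OF x z] by simp
  qed
  ultimately show ?thesis by (rule that)
qed

text \<open>The perturbation is \<open>S h = \<langle>h, z\<rangle> w\<close>, so that \<open>(T \<plusminus> S) h = \<langle>h, x\<rangle> y \<plusminus> \<langle>h, z\<rangle> w\<close>.\<close>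
lemma ell2_contractive_imp_not_extreme:
  fixes T :: "'h::real_inner \<Rightarrow>\<^sub>L 'y::real_normed_vector"
  assumes x: "norm x = 1" and z: "norm z = 1" "inner x z = 0"
    and T: "\<And>h. T h = inner h x *\<^sub>R y"
    and w: "w \<noteq> 0" "ell2_contractive y w"
  shows "\<not> T extreme_point_of cball 0 1"
proof -
  define S :: "'h \<Rightarrow>\<^sub>L 'y" where "S = Blinfun (\<lambda>h. inner h z *\<^sub>R w)"
  have "bounded_linear (\<lambda>h. inner h z *\<^sub>R w)" by (intro bounded_linear_intros)
  then have S: "S h = inner h z *\<^sub>R w" for h
    by (simp add: S_def bounded_linear_Blinfun_apply)
  have bound: "norm (T h + t *\<^sub>R S h) \<le> norm h" if "\<bar>t\<bar> = 1" for h t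
  proof -
    from that have "t = 1 \<or> t = -1" by linarith
    then have "ell2_contractive y (t *\<^sub>R w)"
      using w(2) ell2_contractive_uminus[OF w(2)] by auto
    then have "norm (inner h x *\<^sub>R y + inner h z *\<^sub>R (t *\<^sub>R w))
        \<le> sqrt ((inner h x)\<^sup>2 + (inner h z)\<^sup>2)"
      by (simp add: ell2_contractive_def)
    also have "\<dots> \<le> norm h" using bessel_inequality_pair[OF x z] .
    finally show ?thesis by (simp add: T S mult.commute)
  qed
  have in_ball: "T + S \<in> cball 0 1" "T - S \<in> cball 0 1"
    using bound[of 1] bound[of "-1"]
    by (auto intro!: norm_blinfun_bound simp: plus_blinfun.rep_eq minus_blinfun.rep_eq)
  have "S \<noteq> 0"
  proof
    assume "S = 0"
    then have "S z = 0" by simp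
    with z w(1) show False by (simp add: S power2_norm_eq_inner[symmetric])
  qed
  then have "T + S \<noteq> T - S"
  proof (rule contrapos_nn)
    assume "T + S = T - S"
    then have "2 *\<^sub>R S = 0" by (simp add: scaleR_2 algebra_simps)
    then show "S = 0" by simp
  qed
  then have "T \<in> open_segment (T + S) (T - S)"
    using midpoint_in_open_segment[of "T + S" "T - S"]
    by (simp add: midpoint_def scaleR_add_right[symmetric])
  with in_ball show ?thesis unfolding extreme_point_of_def by blast
qed

section \<open>The CPP\<close>

lemma ell2_contractive_imp_CPP:
  fixes x :: "'h::real_inner" and y v :: "'y::real_normed_vector"
  assumes dim2: "dim (UNIV :: 'y set) = 2" and x: "norm x = 1" and y: "norm y = 1"
    and v: "v \<noteq> 0" "ell2_contractive y v"
  shows "CPP x y"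
proof -
  have bound: "norm (a *\<^sub>R y + (b * norm v) *\<^sub>R w) \<le> 1"
    if z: "bj_orth x z" "norm z = 1" and w: "bj_orth y w" "norm w = 1"
      and ab: "norm (a *\<^sub>R x + b *\<^sub>R z) = 1" for z w a b
  proof -
    have "inner x z = 0" using z(1) by (simp add: bj_orth_iff_inner_eq_0)
    then have ab2: "a\<^sup>2 + b\<^sup>2 = 1" using ab norm_orthonormal_combination[OF x z(2)] by simp
    obtain \<gamma> where \<gamma>: "w = \<gamma> *\<^sub>R v" using bj_orth_dim2_ell2_contractive[OF dim2 y v w(1)] .
    then have "\<bar>norm v * \<gamma>\<bar> = 1" using w(2) by (simp add: abs_mult mult.commute)
    then have "(norm v * \<gamma>)\<^sup>2 = 1" by (metis power2_abs one_power2)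
    then have "(b * norm v * \<gamma>)\<^sup>2 = b\<^sup>2" by (simp only: mult.assoc power_mult_distrib mult_1_right)
    moreover have "norm (a *\<^sub>R y + (b * norm v * \<gamma>) *\<^sub>R v) \<le> sqrt (a\<^sup>2 + (b * norm v * \<gamma>)\<^sup>2)"
      using v(2) by (simp add: ell2_contractive_def)
    ultimately show ?thesis using ab2 by (simp add: \<gamma>)
  qed
  have "norm v > 0" using v(1) by simp
  \<comment> \<open>The bound holds on the whole unit sphere, so any radius \<open>r\<close> will do.\<close>
  with x y bound zero_less_one show ?thesis unfolding CPP_def by blast
qed

lemma CPP_local_bound:
  fixes x z :: "'h::real_inner" and y w :: "'y::real_normed_vector"
  assumes x: "norm x = 1" and z: "norm z = 1" "inner x z = 0"
    and w: "norm w = 1" "bj_orth y w" and cpp: "CPP x y"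
  obtains r \<mu> where "r > 0" "\<mu> > 0"
    "\<And>a b. a\<^sup>2 + b\<^sup>2 = 1 \<Longrightarrow> (a - 1)\<^sup>2 + b\<^sup>2 < r\<^sup>2 \<Longrightarrow> norm (a *\<^sub>R y + (b * \<mu>) *\<^sub>R w) \<le> 1"
proof -
  obtain r \<mu> where r: "r > 0" and \<mu>: "\<mu> > 0" and C: "\<And>z w a b.
      bj_orth x z \<and> norm z = 1 \<and> bj_orth y w \<and> norm w = 1 \<and>
      a *\<^sub>R x + b *\<^sub>R z \<in> ball x r \<and> norm (a *\<^sub>R x + b *\<^sub>R z) = 1
      \<Longrightarrow> norm (a *\<^sub>R y + (b * \<mu>) *\<^sub>R w) \<le> 1"
    using cpp unfolding CPP_def by blast
  have "norm (a *\<^sub>R y + (b * \<mu>) *\<^sub>R w) \<le> 1"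
    if ab: "a\<^sup>2 + b\<^sup>2 = 1" "(a - 1)\<^sup>2 + b\<^sup>2 < r\<^sup>2" for a b
  proof -
    have "dist x (a *\<^sub>R x + b *\<^sub>R z) = norm ((1 - a) *\<^sub>R x + (- b) *\<^sub>R z)"
      by (simp add: dist_norm algebra_simps)
    also have "\<dots> = sqrt ((1 - a)\<^sup>2 + (- b)\<^sup>2)" by (rule norm_orthonormal_combination[OF x z])
    also have "\<dots> = sqrt ((a - 1)\<^sup>2 + b\<^sup>2)" by (simp add: power2_commute)
    also have "\<dots> < r" using ab(2) r by (simp add: real_sqrt_less_iff real_less_lsqrt)
    finally have "a *\<^sub>R x + b *\<^sub>R z \<in> ball x r" by simp
    moreover have "norm (a *\<^sub>R x + b *\<^sub>R z) = 1"
      using norm_orthonormal_combination[OF x z] ab(1) by simp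
    moreover have "bj_orth x z" using z(2) by (simp add: bj_orth_iff_inner_eq_0)
    ultimately show ?thesis using C[of z w a b] z(1) w by blast
  qed
  then show ?thesis by (rule that[OF r \<mu>])
qed

text \<open>Shrinking \<open>\<mu>\<close> to \<open>\<epsilon> \<le> r\<^sup>2/2\<close> extends the CPP inequality from the arc near \<open>x\<close> to the
  whole unit circle: near \<open>-x\<close> by symmetry, and elsewhere \<open>\<bar>a\<bar> \<le> 1 - r\<^sup>2/2\<close>.\<close>
lemma CPP_imp_ell2_contractive:
  fixes x z :: "'h::real_inner" and y w :: "'y::real_normed_vector"
  assumes x: "norm x = 1" and z: "norm z = 1" "inner x z = 0"
    and y: "norm y = 1" and w: "norm w = 1" "bj_orth y w" and cpp: "CPP x y"
  obtains \<epsilon> where "\<epsilon> > 0" "ell2_contractive y (\<epsilon> *\<^sub>R w)"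
proof -
  obtain r \<mu> where r: "r > 0" and \<mu>: "\<mu> > 0" and near: "\<And>a b. a\<^sup>2 + b\<^sup>2 = 1 \<Longrightarrow>
      (a - 1)\<^sup>2 + b\<^sup>2 < r\<^sup>2 \<Longrightarrow> norm (a *\<^sub>R y + (b * \<mu>) *\<^sub>R w) \<le> 1"
    using CPP_local_bound[OF x z w cpp] by blast
  define \<epsilon> where "\<epsilon> = min \<mu> (r\<^sup>2 / 2)"
  have \<epsilon>: "0 < \<epsilon>" "\<epsilon> \<le> \<mu>" "\<epsilon> \<le> r\<^sup>2 / 2" using r \<mu> by (auto simp: \<epsilon>_def)
  have unit: "\<bar>a\<bar> \<le> 1" "\<bar>b\<bar> \<le> 1" if "a\<^sup>2 + b\<^sup>2 = 1" for a b :: real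
  proof -
    have "a\<^sup>2 \<le> 1" "b\<^sup>2 \<le> 1" using that zero_le_power2[of a] zero_le_power2[of b] by linarith+
    then show "\<bar>a\<bar> \<le> 1" "\<bar>b\<bar> \<le> 1" by (simp_all add: abs_square_le_1)
  qed
  have near\<epsilon>: "norm (a *\<^sub>R y + (b * \<epsilon>) *\<^sub>R w) \<le> 1"
    if ab: "a\<^sup>2 + b\<^sup>2 = 1" "(a - 1)\<^sup>2 + b\<^sup>2 < r\<^sup>2" for a b
  proof -
    define \<theta> where "\<theta> = \<epsilon> / \<mu>"
    have \<theta>: "0 \<le> \<theta>" "\<theta> \<le> 1" using \<epsilon> \<mu> by (auto simp: \<theta>_def)
    have in1: "a *\<^sub>R y \<in> cball 0 1" using unit[OF ab(1)] y by simp
    have in2: "a *\<^sub>R y + (b * \<mu>) *\<^sub>R w \<in> cball 0 1" using near[OF ab] by simp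
    have "(1 - \<theta>) *\<^sub>R (a *\<^sub>R y) + \<theta> *\<^sub>R (a *\<^sub>R y + (b * \<mu>) *\<^sub>R w) \<in> cball 0 1"
      by (rule convexD[OF convex_cball in1 in2]) (use \<theta> in auto)
    also have "(1 - \<theta>) *\<^sub>R (a *\<^sub>R y) + \<theta> *\<^sub>R (a *\<^sub>R y + (b * \<mu>) *\<^sub>R w)
        = a *\<^sub>R y + (b * \<epsilon>) *\<^sub>R w"
      using \<mu> by (simp add: \<theta>_def algebra_simps)
    finally show ?thesis by simp
  qed
  have "norm (a *\<^sub>R y + b *\<^sub>R (\<epsilon> *\<^sub>R w)) \<le> 1" if ab: "a\<^sup>2 + b\<^sup>2 = 1" for a b
  proof -
    have dist_pm: "(a - 1)\<^sup>2 + b\<^sup>2 = 2 - 2 * a" "(- a - 1)\<^sup>2 + (- b)\<^sup>2 = 2 + 2 * a"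
      using ab by (simp_all add: power2_eq_square algebra_simps)
    consider "(a - 1)\<^sup>2 + b\<^sup>2 < r\<^sup>2" | "(- a - 1)\<^sup>2 + (- b)\<^sup>2 < r\<^sup>2" | "\<bar>a\<bar> \<le> 1 - r\<^sup>2 / 2"
      unfolding dist_pm by linarith
    then show ?thesis
    proof cases
      case 1
      then show ?thesis using near\<epsilon>[OF ab] by (simp add: mult.commute)
    next
      case 2
      then have "norm ((- a) *\<^sub>R y + (- b * \<epsilon>) *\<^sub>R w) \<le> 1" using ab by (intro near\<epsilon>) simp_all
      moreover have "(- a) *\<^sub>R y + (- b * \<epsilon>) *\<^sub>R w = - (a *\<^sub>R y + b *\<^sub>R (\<epsilon> *\<^sub>R w))"
        by (simp add: algebra_simps)
      ultimately show ?thesis by (metis norm_minus_cancel)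
    next
      case 3
      have "norm (a *\<^sub>R y + b *\<^sub>R (\<epsilon> *\<^sub>R w)) \<le> \<bar>a\<bar> + \<epsilon> * \<bar>b\<bar>"
        using norm_triangle_ineq[of "a *\<^sub>R y" "b *\<^sub>R (\<epsilon> *\<^sub>R w)"] y w \<epsilon> by (simp add: abs_mult mult.commute)
      also have "\<dots> \<le> \<bar>a\<bar> + \<epsilon>" using unit[OF ab] \<epsilon> by (simp add: mult_le_cancel_left1)
      finally show ?thesis using 3 \<epsilon> by linarith
    qed
  qed
  with \<epsilon> show ?thesis by (intro that ell2_contractive_if_unit_circle) auto
qed

lemma extreme_contraction_iff_not_CPP:
  fixes T :: "'h::real_inner \<Rightarrow>\<^sub>L 'y::real_normed_vector"
  assumes dimH: "\<exists>u v::'h. norm u = 1 \<and> norm v = 1 \<and> inner u v = 0"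
    and dimY: "dim (UNIV :: 'y set) = 2"
    and smooth: "smooth_space TYPE('y)"
    and strict: "strictly_convex_space TYPE('y)"
    and x: "norm x = 1" and y: "norm y = 1" and T: "\<And>h. T h = inner h x *\<^sub>R y"
  shows "extreme_contraction T \<longleftrightarrow> \<not> CPP x y"
proof -
  obtain u v :: 'h where "norm u = 1" "norm v = 1" "inner u v = 0" using dimH by blast
  then obtain z where z: "norm z = 1" "inner x z = 0" using exists_unit_orthogonal by blast
  obtain w where w: "norm w = 1" "bj_orth y w" using exists_unit_bj_orth[OF dimY smooth y] .
  have "extreme_contraction T \<longleftrightarrow> T extreme_point_of cball 0 1"
    using norm_inner_tensor[OF x y T] by (simp add: extreme_contraction_def)
  also have "\<dots> \<longleftrightarrow> \<not> (\<exists>v. v \<noteq> 0 \<and> ell2_contractive y v)"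
  proof
    show "\<not> (\<exists>v. v \<noteq> 0 \<and> ell2_contractive y v)" if "T extreme_point_of cball 0 1"
      using ell2_contractive_imp_not_extreme[OF x z T] that by blast
    show "T extreme_point_of cball 0 1" if "\<not> (\<exists>v. v \<noteq> 0 \<and> ell2_contractive y v)"
      using not_extreme_imp_ell2_contractive[OF strict x y T] that by blast
  qed
  also have "\<dots> \<longleftrightarrow> \<not> CPP x y"
  proof -
    have "\<exists>v. v \<noteq> 0 \<and> ell2_contractive y v" if cpp: "CPP x y"
    proof -
      obtain \<epsilon> where "\<epsilon> > 0" "ell2_contractive y (\<epsilon> *\<^sub>R w)"
        using CPP_imp_ell2_contractive[OF x z y w cpp] .
      moreover have "\<epsilon> *\<^sub>R w \<noteq> 0" using \<open>\<epsilon> > 0\<close> w(1) by auto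
      ultimately show ?thesis by blast
    qed
    then show ?thesis using ell2_contractive_imp_CPP[OF dimY x y] by blast
  qed
  finally show ?thesis .
qed

theorem mainTheorem9:
  fixes T :: "'h::{real_inner, complete_space} \<Rightarrow>\<^sub>L 'y::banach"
  assumes dimH: "\<exists>u v::'h. norm u = 1 \<and> norm v = 1 \<and> inner u v = 0"
    and dimY: "dim (UNIV :: 'y set) = 2"
    and smooth: "smooth_space TYPE('y)"
    and strict: "strictly_convex_space TYPE('y)"
    and rank1: "dim (range (blinfun_apply T)) = 1"
    and normT: "norm T = 1"
  shows "(\<exists>x. norm x = 1 \<and> norm_attain T = {x, -x}) \<and>
         (\<forall>x. norm x = 1 \<and> norm_attain T = {x, -x} \<longrightarrow>
              (extreme_contraction T \<longleftrightarrow> \<not> CPP x (blinfun_apply T x)))"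
proof -
  obtain x y where x: "norm x = 1" and y: "norm y = 1" and T: "\<And>h. T h = inner h x *\<^sub>R y"
    using rank_one_norm_one_eq_inner[OF smooth rank1 normT] by blast
  have NA: "norm_attain T = {x, -x}" by (rule norm_attain_inner_tensor[OF x y T])
  have "extreme_contraction T \<longleftrightarrow> \<not> CPP x' (T x')"
    if x': "norm x' = 1" "norm_attain T = {x', -x'}" for x'
  proof -
    have "x' = x \<or> x' = -x" using x' NA by auto
    then have "T h = inner h x' *\<^sub>R T x'" "norm (T x') = 1" for h
      using x y by (auto simp: T power2_norm_eq_inner[symmetric])
    then show ?thesis by (intro extreme_contraction_iff_not_CPP[OF dimH dimY smooth strict x'(1)])
  qed
  with NA x show ?thesis by blast
qed

end
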